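(* Let $\mathcal H$ be a family of graphs. The following are equivalent: (i) there are constants $c_1=c_1(\mathcal H)$ and $c_2=c_2(\mathcal H)$ such that every $\mathcal H$-free graph $G$ has fewer than $c_2$ vertices of degree at least $c_1$; (ii) there is a positive integer $n$ such that $\mathcal H\le\{K_n,\ K_{n,n},\ nK_{1,n}\}$.
   Context: All graphs are finite, simple, undirected. For graphs $H_1,H_2$, write $H_1\prec H_2$ if $H_2$ contains an induced subgraph isomorphic to $H_1$. A graph $G$ is $\mathcal H$-free if no $H\in\mathcal H$ satisfies $H\prec G$. For families $\mathcal H_1,\mathcal H_2$, write $\mathcal H_1\le\mathcal H_2$ if for every $H_2\in\mathcal H_2$ there is $H_1\in\mathcal H_1$ with $H_1\prec H_2$. $K_n$ is the complete graph, $K_{s,t}$ the complete bipartite graph, and $nG$ the disjoint union of $n$ copies of $G$. *)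

theory Defs
  imports Main "HOL-Library.Nat_Bijection"
begin

text \<open>A finite simple graph on natural-number vertices: a pair (V, E) with V finite
and E a set of 2-element subsets of V. Every finite simple graph is isomorphic to one of these.\<close>

type_synonym graph = "nat set \<times> nat set set"

definition wf_graph :: "graph \<Rightarrow> bool" where
  "wf_graph G \<longleftrightarrow> finite (fst G) \<and> (\<forall>e\<in>snd G. card e = 2 \<and> e \<subseteq> fst G)"

definition induced_sub :: "graph \<Rightarrow> graph \<Rightarrow> bool" (infix "\<prec>" 50) where
  "H \<prec> G \<longleftrightarrow> (\<exists>f. inj_on f (fst H) \<and> f ` fst H \<subseteq> fst G \<and>
      (\<forall>u\<in>fst H. \<forall>v\<in>fst H. {u, v} \<in> snd H \<longleftrightarrow> {f u, f v} \<in> snd G))"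

definition H_free :: "graph set \<Rightarrow> graph \<Rightarrow> bool" where
  "H_free \<H> G \<longleftrightarrow> (\<forall>H\<in>\<H>. \<not> H \<prec> G)"

definition fam_le :: "graph set \<Rightarrow> graph set \<Rightarrow> bool" where
  "fam_le \<H>1 \<H>2 \<longleftrightarrow> (\<forall>H2\<in>\<H>2. \<exists>H1\<in>\<H>1. H1 \<prec> H2)"

definition degree :: "graph \<Rightarrow> nat \<Rightarrow> nat" where
  "degree G v = card {u \<in> fst G. {v, u} \<in> snd G}"

definition complete :: "nat \<Rightarrow> graph" where
  "complete n = ({0..<n}, {{i, j} | i j. i < n \<and> j < n \<and> i \<noteq> j})"

definition complete_bip :: "nat \<Rightarrow> nat \<Rightarrow> graph" where
  "complete_bip s t = ({0..<s+t}, {{i, j} | i j. i < s \<and> s \<le> j \<and> j < s + t})"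

definition copies :: "nat \<Rightarrow> graph \<Rightarrow> graph" where
  "copies m G = ((\<lambda>(i, v). prod_encode (i, v)) ` ({0..<m} \<times> fst G),
     {{prod_encode (i, u), prod_encode (i, v)} | i u v. i < m \<and> {u, v} \<in> snd G})"

end

theory Submission
  imports Defs "HOL-Library.Ramsey"
begin

text \<open>
  (i) implies (ii): each of \<open>K\<^sub>N\<close>, \<open>K\<^sub>N\<^sub>,\<^sub>N\<close> and \<open>N K\<^sub>1\<^sub>,\<^sub>N\<close> has at least \<open>N\<close> vertices
  of degree at least \<open>N - 1\<close>, so for \<open>N = c\<^sub>1 + c\<^sub>2 + 1\<close> none of them is \<open>\<H>\<close>-free.

  (ii) implies (i): let \<open>G\<close> have none of \<open>K\<^sub>n\<close>, \<open>K\<^sub>n\<^sub>,\<^sub>n\<close>, \<open>n K\<^sub>1\<^sub>,\<^sub>n\<close> as an induced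
  subgraph and let \<open>t\<close> be the Ramsey number \<open>R(n, n)\<close>, so that any \<open>t\<close> vertices of \<open>G\<close> contain
  an independent \<open>n\<close>-set. Call \<open>w\<close> heavy for a vertex set \<open>S\<close> if it misses fewer than
  \<open>|S|/t\<close> vertices of \<open>S\<close>. Fewer than \<open>t\<close> vertices are heavy for \<open>S\<close>: \<open>t\<close> of them would
  have \<open>t\<close> common neighbours in \<open>S\<close>, and Ramsey inside both sides gives an induced
  \<open>K\<^sub>n\<^sub>,\<^sub>n\<close>. So every large set \<open>P\<close> contains a vertex that is light for \<open>P\<close>, for a set
  \<open>C\<close> of candidate centres and for the neighbourhoods of most candidates; deleting its
  closed neighbourhood shrinks all these sets by a factor of about \<open>2t\<close> only. Choosing such
  vertices greedily yields a centre, then \<open>n\<close> independent leaves in its neighbourhood,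
  all non-adjacent to the surviving candidates and their neighbourhoods; \<open>n\<close> rounds give an
  induced \<open>n K\<^sub>1\<^sub>,\<^sub>n\<close>. The sizes needed are iterates of \<open>growth t\<close>, so fewer than
  \<open>c = growth t\<^bsup>n(n+1)\<^esup> 0\<close> vertices have degree at least \<open>c\<close>.
\<close>

section \<open>Neighbourhoods and separated sets\<close>

lemma wf_graph_finite: "wf_graph G \<Longrightarrow> finite (fst G)"
  by (simp add: wf_graph_def)

lemma wf_graph_no_loop: "wf_graph G \<Longrightarrow> {x} \<notin> snd G"
  by (force simp: wf_graph_def)

definition neighbours :: "graph \<Rightarrow> nat \<Rightarrow> nat set" where
  "neighbours G v = {u \<in> fst G. {v, u} \<in> snd G}"

definition closed_neighbours :: "graph \<Rightarrow> nat \<Rightarrow> nat set" where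
  "closed_neighbours G v = insert v (neighbours G v)"

lemma degree_eq_card_neighbours: "degree G v = card (neighbours G v)"
  by (simp add: degree_def neighbours_def)

lemma card_le_degree: "wf_graph G \<Longrightarrow> Y \<subseteq> neighbours G v \<Longrightarrow> card Y \<le> degree G v"
  unfolding degree_eq_card_neighbours neighbours_def
  by (rule card_mono) (auto dest: wf_graph_finite)

lemma card_le_card_high_degree:
  assumes "wf_graph G" "X \<subseteq> fst G" "\<forall>x\<in>X. d \<le> degree G x"
  shows "card X \<le> card {v \<in> fst G. d \<le> degree G v}"
  using assms by (intro card_mono) (auto dest: wf_graph_finite)

definition separated :: "graph \<Rightarrow> nat set \<Rightarrow> nat set \<Rightarrow> bool" where
  "separated G A B \<longleftrightarrow> (\<forall>a\<in>A. \<forall>b\<in>B. a \<noteq> b \<and> {a, b} \<notin> snd G)"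

lemma separated_sym: "separated G A B \<longleftrightarrow> separated G B A"
  by (auto simp: separated_def) (metis insert_commute)+

lemma separated_mono: "separated G A B \<Longrightarrow> A' \<subseteq> A \<Longrightarrow> B' \<subseteq> B \<Longrightarrow> separated G A' B'"
  by (auto simp: separated_def)

lemma separated_insertI: "separated G {w} B \<Longrightarrow> separated G A B \<Longrightarrow> separated G (insert w A) B"
  by (auto simp: separated_def)

lemma separated_outside_closed_neighbours:
  "B \<subseteq> fst G - closed_neighbours G w \<Longrightarrow> separated G {w} B"
  by (auto simp: separated_def closed_neighbours_def neighbours_def)

lemma indep_insert_separated: "indep A (snd G) \<Longrightarrow> separated G {w} A \<Longrightarrow> indep (insert w A) (snd G)"
  by (auto simp: indep_def separated_def insert_commute)

section \<open>Induced embeddings\<close>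

definition induced_embedding :: "('a \<Rightarrow> 'a \<Rightarrow> bool) \<Rightarrow> 'a set \<Rightarrow> graph \<Rightarrow> ('a \<Rightarrow> nat) \<Rightarrow> bool" where
  "induced_embedding R D G f \<longleftrightarrow> inj_on f D \<and> f ` D \<subseteq> fst G \<and>
     (\<forall>p\<in>D. \<forall>q\<in>D. R p q \<longleftrightarrow> {f p, f q} \<in> snd G)"

lemma induced_sub_iff_embedding:
  "induced_sub H G \<longleftrightarrow> (\<exists>f. induced_embedding (\<lambda>u v. {u, v} \<in> snd H) (fst H) G f)"
  by (simp add: induced_sub_def induced_embedding_def)

lemma induced_embedding_comp:
  assumes "induced_embedding R D G f" "inj_on g D'" "g ` D' \<subseteq> D"
    and "\<forall>p\<in>D'. \<forall>q\<in>D'. R (g p) (g q) \<longleftrightarrow> R' p q"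
  shows "induced_embedding R' D' G (f \<circ> g)"
proof -
  have "inj_on (f \<circ> g) D'"
    using assms(1-3) unfolding induced_embedding_def by (blast intro: comp_inj_on inj_on_subset)
  then show ?thesis
    using assms unfolding induced_embedding_def by (auto simp: image_subset_iff)
qed

lemma induced_sub_trans:
  assumes "induced_sub H K" "induced_sub K G"
  shows "induced_sub H G"
proof -
  obtain g where g: "induced_embedding (\<lambda>u v. {u, v} \<in> snd H) (fst H) K g"
    using assms(1) unfolding induced_sub_iff_embedding by blast
  obtain f where f: "induced_embedding (\<lambda>u v. {u, v} \<in> snd K) (fst K) G f"
    using assms(2) unfolding induced_sub_iff_embedding by blast
  have "induced_embedding (\<lambda>u v. {u, v} \<in> snd H) (fst H) G (f \<circ> g)"
    using g by (intro induced_embedding_comp[OF f]) (auto simp: induced_embedding_def)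
  then show ?thesis
    unfolding induced_sub_iff_embedding by blast
qed

lemma induced_embedding_join:
  assumes "induced_embedding R D1 G f" "induced_embedding R D2 G g"
    and "\<forall>p\<in>D1. \<forall>q\<in>D2. \<not> R p q \<and> \<not> R q p" "separated G (f ` D1) (g ` D2)"
  shows "induced_embedding R (D1 \<union> D2) G (\<lambda>p. if p \<in> D1 then f p else g p)"
  using assms unfolding induced_embedding_def separated_def inj_on_def
  by (auto simp: insert_commute) (metis+)

lemma H_free_mono: "fam_le \<H>1 \<H>2 \<Longrightarrow> H_free \<H>1 G \<Longrightarrow> H_free \<H>2 G"
  unfolding fam_le_def H_free_def by (metis induced_sub_trans)

lemma fam_le_iff_not_H_free: "fam_le \<H>1 \<H>2 \<longleftrightarrow> (\<forall>H\<in>\<H>2. \<not> H_free \<H>1 H)"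
  by (auto simp: fam_le_def H_free_def)

section \<open>The forbidden graphs\<close>

lemma edge_complete: "{u, v} \<in> snd (complete n) \<longleftrightarrow> u \<noteq> v \<and> u < n \<and> v < n"
  by (auto simp: complete_def doubleton_eq_iff)

lemma edge_complete_bip:
  "{u, v} \<in> snd (complete_bip s t) \<longleftrightarrow> (u < s \<and> s \<le> v \<and> v < s + t) \<or> (v < s \<and> s \<le> u \<and> u < s + t)"
  by (auto simp: complete_bip_def doubleton_eq_iff)

lemma edge_copies:
  "{prod_encode p, prod_encode q} \<in> snd (copies m H) \<longleftrightarrow>
     fst p = fst q \<and> fst p < m \<and> {snd p, snd q} \<in> snd H"
  by (cases p; cases q) (auto simp: copies_def doubleton_eq_iff insert_commute)

lemma fst_complete: "fst (complete n) = {0..<n}"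
  by (simp add: complete_def)

lemma fst_complete_bip: "fst (complete_bip s t) = {0..<s+t}"
  by (simp add: complete_bip_def)

lemma fst_copies: "fst (copies m H) = prod_encode ` ({0..<m} \<times> fst H)"
  by (simp add: copies_def case_prod_eta)

lemma wf_complete: "wf_graph (complete n)"
  by (auto simp: wf_graph_def complete_def card_insert_if)

lemma wf_complete_bip: "wf_graph (complete_bip s t)"
  by (auto simp: wf_graph_def complete_bip_def card_insert_if)

lemma wf_copies: "wf_graph H \<Longrightarrow> wf_graph (copies m H)"
  using wf_graph_no_loop[of H] by (auto simp: wf_graph_def copies_def card_insert_if)

lemma clique_induced_sub:
  assumes "wf_graph G" "X \<subseteq> fst G" "card X = n" "clique X (snd G)"
  shows "induced_sub (complete n) G"
proof -
  obtain h where h: "bij_betw h {0..<n} X"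
    using ex_bij_betw_nat_finite assms(1-3) by (metis finite_subset wf_graph_finite)
  have "induced_embedding (\<noteq>) X G id"
    using assms wf_graph_no_loop[OF assms(1)] by (auto simp: induced_embedding_def clique_def)
  then have "induced_embedding (\<lambda>u v. {u, v} \<in> snd (complete n)) {0..<n} G (id \<circ> h)"
    using h by (intro induced_embedding_comp) (auto simp: bij_betw_def inj_on_eq_iff edge_complete)
  then show ?thesis
    unfolding induced_sub_iff_embedding fst_complete by blast
qed

lemma bij_betw_two_blocks:
  assumes "finite A" "finite B" "A \<inter> B = {}" "card A = n" "card B = n"
  obtains h where "bij_betw h {0..<n+n} (A \<union> B)" "\<And>u. u < n + n \<Longrightarrow> h u \<in> A \<longleftrightarrow> u < n"
proof -
  have "card {0..<n} = card A" "card {n..<n+n} = card B"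
    using assms(4,5) by simp_all
  then obtain ha hb where ha: "bij_betw ha {0..<n} A" and hb: "bij_betw hb {n..<n+n} B"
    using finite_same_card_bij assms(1,2) by (metis finite_atLeastLessThan)
  define h where "h u = (if u < n then ha u else hb u)" for u
  have "bij_betw h {0..<n} A"
    by (rule bij_betw_cong[THEN iffD1, OF _ ha]) (simp add: h_def)
  moreover have "bij_betw h {n..<n+n} B"
    by (rule bij_betw_cong[THEN iffD1, OF _ hb]) (simp add: h_def)
  ultimately have "bij_betw h ({0..<n} \<union> {n..<n+n}) (A \<union> B)"
    using assms(3) by (rule bij_betw_combine)
  moreover have "{0..<n} \<union> {n..<n+n} = {0..<n+n}"
    by auto
  moreover have "h u \<in> A \<longleftrightarrow> u < n" if "u < n + n" for u
  proof (cases "u < n")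
    case True
    then show ?thesis using ha by (auto simp: h_def bij_betw_def)
  next
    case False
    then have "h u \<in> B" using that hb by (auto simp: h_def bij_betw_def)
    then show ?thesis using False assms(3) by blast
  qed
  ultimately show ?thesis
    using that by simp
qed

lemma biclique_induced_embedding:
  assumes "wf_graph G" "A \<union> B \<subseteq> fst G" "indep A (snd G)" "indep B (snd G)"
    and "\<forall>a\<in>A. \<forall>b\<in>B. {a, b} \<in> snd G"
  shows "induced_embedding (\<lambda>x y. (x \<in> A) \<noteq> (y \<in> A)) (A \<union> B) G id"
  unfolding induced_embedding_def
proof (intro conjI ballI)
  fix x y assume "x \<in> A \<union> B" "y \<in> A \<union> B"
  then consider "x \<in> A" "y \<in> A" | "x \<in> A" "y \<in> B - A" | "x \<in> B - A" "y \<in> A"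
    | "x \<in> B - A" "y \<in> B - A"
    by blast
  then show "((x \<in> A) \<noteq> (y \<in> A)) = ({id x, id y} \<in> snd G)"
  proof cases
    case 1
    then show ?thesis
      using assms(3) wf_graph_no_loop[OF assms(1)] unfolding indep_def by (cases "x = y") auto
  next
    case 2
    then show ?thesis using assms(5) by simp
  next
    case 3
    then have "{y, x} \<in> snd G" using assms(5) by blast
    then show ?thesis using 3 by (simp add: insert_commute)
  next
    case 4
    then show ?thesis
      using assms(4) wf_graph_no_loop[OF assms(1)] unfolding indep_def by (cases "x = y") auto
  qed
qed (use assms(2) in auto)

lemma biclique_induced_sub:
  assumes "wf_graph G" "A \<subseteq> fst G" "B \<subseteq> fst G" "card A = n" "card B = n"
    and "indep A (snd G)" "indep B (snd G)" "\<forall>a\<in>A. \<forall>b\<in>B. {a, b} \<in> snd G"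
  shows "induced_sub (complete_bip n n) G"
proof -
  have "finite A" "finite B"
    using assms(1-3) wf_graph_finite finite_subset by metis+
  moreover have "A \<inter> B = {}"
    using assms(8) wf_graph_no_loop[OF assms(1)] by fastforce
  ultimately obtain h where h: "bij_betw h {0..<n+n} (A \<union> B)"
    and side: "\<And>u. u < n + n \<Longrightarrow> h u \<in> A \<longleftrightarrow> u < n"
    using assms(4,5) by (rule bij_betw_two_blocks) blast
  have "induced_embedding (\<lambda>x y. (x \<in> A) \<noteq> (y \<in> A)) (A \<union> B) G id"
    using assms(1-3,6-8) by (intro biclique_induced_embedding) auto
  then have "induced_embedding (\<lambda>u v. {u, v} \<in> snd (complete_bip n n)) {0..<n+n} G (id \<circ> h)"
    using h side by (intro induced_embedding_comp) (auto simp: bij_betw_def edge_complete_bip)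
  then show ?thesis
    unfolding induced_sub_iff_embedding fst_complete_bip by blast
qed

text \<open>Vertex \<open>(i, 0)\<close> is the centre of the \<open>i\<close>-th star and \<open>(i, a)\<close>, \<open>1 \<le> a \<le> n\<close>, are its
  leaves, exactly as in \<^term>\<open>copies n (complete_bip 1 n)\<close>.\<close>

definition star_forest_adj :: "nat \<times> nat \<Rightarrow> nat \<times> nat \<Rightarrow> bool" where
  "star_forest_adj p q \<longleftrightarrow> fst p = fst q \<and> (snd p = 0) \<noteq> (snd q = 0)"

lemma star_forest_induced_sub:
  assumes "induced_embedding star_forest_adj ({0..<m} \<times> {0..<Suc n}) G \<phi>"
  shows "induced_sub (copies m (complete_bip 1 n)) G"
proof -
  let ?H = "copies m (complete_bip 1 n)"
  have "induced_embedding (\<lambda>u v. {u, v} \<in> snd ?H) (fst ?H) G (\<phi> \<circ> prod_decode)"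
  proof (rule induced_embedding_comp[OF assms])
    show "inj_on prod_decode (fst ?H)"
      by (rule inj_prod_decode)
    show "prod_decode ` fst ?H \<subseteq> {0..<m} \<times> {0..<Suc n}"
      by (auto simp: fst_copies fst_complete_bip)
    show "\<forall>u\<in>fst ?H. \<forall>v\<in>fst ?H. star_forest_adj (prod_decode u) (prod_decode v) \<longleftrightarrow> {u, v} \<in> snd ?H"
    proof (intro ballI)
      fix u v assume "u \<in> fst ?H" "v \<in> fst ?H"
      then obtain i a j b where "u = prod_encode (i, a)" "v = prod_encode (j, b)" "i < m" "a < Suc n" "b < Suc n"
        by (auto simp: fst_copies fst_complete_bip)
      then show "star_forest_adj (prod_decode u) (prod_decode v) \<longleftrightarrow> {u, v} \<in> snd ?H"
        by (auto simp: edge_copies edge_complete_bip star_forest_adj_def)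
    qed
  qed
  then show ?thesis
    unfolding induced_sub_iff_embedding by blast
qed

lemma star_induced_embedding:
  assumes "wf_graph G" "w \<in> fst G" "bij_betw e {1..n} \<Lambda>" "\<Lambda> \<subseteq> neighbours G w" "indep \<Lambda> (snd G)"
  shows "induced_embedding star_forest_adj ({k} \<times> {0..<Suc n}) G
           (\<lambda>p. if snd p = 0 then w else e (snd p))" (is "induced_embedding _ ?D G ?\<phi>")
proof -
  have leaf: "e a \<in> \<Lambda>" if "a \<noteq> 0" "a < Suc n" for a
    using assms(3) that by (auto simp: bij_betw_def)
  have leaf_inj: "e a = e b \<longleftrightarrow> a = b" if "a \<noteq> 0" "a < Suc n" "b \<noteq> 0" "b < Suc n" for a b
    using that by (intro inj_on_eq_iff[OF bij_betw_imp_inj_on[OF assms(3)]]) auto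
  have centre_adj: "{w, x} \<in> snd G \<and> x \<in> fst G" if "x \<in> \<Lambda>" for x
    using assms(4) that by (auto simp: neighbours_def)
  have no_loop: "{x} \<notin> snd G" for x
    using wf_graph_no_loop[OF assms(1)] .
  have centre_not_leaf: "w \<notin> \<Lambda>"
    using centre_adj[of w] no_loop[of w] by auto
  show ?thesis
    unfolding induced_embedding_def
  proof (intro conjI ballI)
    show "?\<phi> ` ?D \<subseteq> fst G"
      using assms(2) leaf centre_adj by auto
    show "inj_on ?\<phi> ?D"
      using leaf leaf_inj centre_not_leaf by (auto simp: inj_on_def split: if_splits)
    fix p q assume "p \<in> ?D" "q \<in> ?D"
    then obtain a b where pq: "p = (k, a)" "q = (k, b)" "a < Suc n" "b < Suc n"
      by auto
    show "star_forest_adj p q \<longleftrightarrow> {?\<phi> p, ?\<phi> q} \<in> snd G"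
    proof (cases "a = 0"; cases "b = 0")
      assume "a = 0" "b = 0"
      then show ?thesis using pq no_loop by (simp add: star_forest_adj_def)
    next
      assume "a = 0" "b \<noteq> 0"
      then show ?thesis using pq leaf centre_adj by (simp add: star_forest_adj_def)
    next
      assume "a \<noteq> 0" "b = 0"
      then show ?thesis using pq centre_adj[OF leaf[of a]] by (simp add: star_forest_adj_def insert_commute)
    next
      assume "a \<noteq> 0" "b \<noteq> 0"
      then show ?thesis
        using pq leaf[of a] leaf[of b] leaf_inj[of a b] no_loop[of "e a"] assms(5)
        by (cases "a = b") (auto simp: star_forest_adj_def indep_def)
    qed
  qed
qed

lemma star_forest_extend:
  assumes "wf_graph G" "induced_embedding star_forest_adj ({0..<k} \<times> {0..<Suc n}) G \<phi>"
    and "w \<in> fst G" "\<Lambda> \<subseteq> neighbours G w" "card \<Lambda> = n" "indep \<Lambda> (snd G)"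
    and "separated G (\<phi> ` ({0..<k} \<times> {0..<Suc n})) (insert w \<Lambda>)"
  obtains \<psi> where "induced_embedding star_forest_adj ({0..<Suc k} \<times> {0..<Suc n}) G \<psi>"
    and "\<psi> ` ({0..<Suc k} \<times> {0..<Suc n}) \<subseteq> \<phi> ` ({0..<k} \<times> {0..<Suc n}) \<union> insert w \<Lambda>"
proof -
  let ?D = "{0..<k} \<times> {0..<Suc n}"
  have "\<Lambda> \<subseteq> fst G"
    using assms(4) by (auto simp: neighbours_def)
  then have "finite \<Lambda>"
    using wf_graph_finite[OF assms(1)] finite_subset by blast
  then obtain e where e: "bij_betw e {1..n} \<Lambda>"
    using ex_bij_betw_nat_finite_1 assms(5) by blast
  let ?star = "\<lambda>p. if snd p = 0 then w else e (snd p)"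
  have star: "induced_embedding star_forest_adj ({k} \<times> {0..<Suc n}) G ?star"
    using assms(1,3) e assms(4,6) by (rule star_induced_embedding)
  have star_img: "?star ` ({k} \<times> {0..<Suc n}) \<subseteq> insert w \<Lambda>"
    using e by (auto simp: bij_betw_def)
  let ?\<psi> = "\<lambda>p. if p \<in> ?D then \<phi> p else ?star p"
  have "induced_embedding star_forest_adj (?D \<union> {k} \<times> {0..<Suc n}) G ?\<psi>"
    using assms(2) star separated_mono[OF assms(7) order_refl star_img]
    by (intro induced_embedding_join) (auto simp: star_forest_adj_def)
  moreover have "{0..<Suc k} \<times> {0..<Suc n} = ?D \<union> {k} \<times> {0..<Suc n}"
    by auto
  moreover have "?\<psi> ` (?D \<union> {k} \<times> {0..<Suc n}) \<subseteq> \<phi> ` ?D \<union> insert w \<Lambda>"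
  proof (rule image_subsetI)
    fix p assume p: "p \<in> ?D \<union> {k} \<times> {0..<Suc n}"
    show "?\<psi> p \<in> \<phi> ` ?D \<union> insert w \<Lambda>"
    proof (cases "p \<in> ?D")
      case False
      then have "?star p \<in> insert w \<Lambda>"
        using p star_img by blast
      then show ?thesis
        unfolding if_not_P[OF False] by (rule UnI2)
    qed simp
  qed
  ultimately show ?thesis
    using that by simp
qed

lemma card_high_degree_complete:
  assumes "d < N"
  shows "N \<le> card {v \<in> fst (complete N). d \<le> degree (complete N) v}"
proof -
  have "d \<le> degree (complete N) x" if "x \<in> {0..<N}" for x
  proof -
    have "{0..<N} - {x} \<subseteq> neighbours (complete N) x"
      using that by (auto simp: neighbours_def edge_complete fst_complete)
    then have "card ({0..<N} - {x}) \<le> degree (complete N) x"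
      by (rule card_le_degree[OF wf_complete])
    then show ?thesis using that assms by simp
  qed
  then have "card {0..<N} \<le> card {v \<in> fst (complete N). d \<le> degree (complete N) v}"
    by (intro card_le_card_high_degree[OF wf_complete]) (auto simp: fst_complete)
  then show ?thesis
    by simp
qed

lemma card_high_degree_complete_bip:
  assumes "d < N"
  shows "N \<le> card {v \<in> fst (complete_bip N N). d \<le> degree (complete_bip N N) v}"
proof -
  have "d \<le> degree (complete_bip N N) x" if "x \<in> {0..<N}" for x
  proof -
    have "{N..<N+N} \<subseteq> neighbours (complete_bip N N) x"
      using that by (auto simp: neighbours_def edge_complete_bip fst_complete_bip)
    then have "card {N..<N+N} \<le> degree (complete_bip N N) x"
      by (rule card_le_degree[OF wf_complete_bip])
    then show ?thesis using assms by simp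
  qed
  then have "card {0..<N} \<le> card {v \<in> fst (complete_bip N N). d \<le> degree (complete_bip N N) v}"
    by (intro card_le_card_high_degree[OF wf_complete_bip]) (auto simp: fst_complete_bip)
  then show ?thesis
    by simp
qed

lemma card_high_degree_copies:
  assumes "d < N"
  shows "N \<le> card {v \<in> fst (copies N (complete_bip 1 N)). d \<le> degree (copies N (complete_bip 1 N)) v}"
proof -
  let ?H = "copies N (complete_bip 1 N)"
  let ?centres = "(\<lambda>i. prod_encode (i, 0)) ` {0..<N}"
  have "d \<le> degree ?H (prod_encode (i, 0))" if "i < N" for i
  proof -
    have "(\<lambda>a. prod_encode (i, a)) ` {1..N} \<subseteq> neighbours ?H (prod_encode (i, 0))"
      using that by (auto simp: neighbours_def edge_copies edge_complete_bip fst_copies fst_complete_bip)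
    then have "card ((\<lambda>a. prod_encode (i, a)) ` {1..N}) \<le> degree ?H (prod_encode (i, 0))"
      by (rule card_le_degree[OF wf_copies[OF wf_complete_bip]])
    then show ?thesis using assms by (simp add: card_image inj_on_def)
  qed
  moreover have "?centres \<subseteq> fst ?H"
    by (auto simp: fst_copies fst_complete_bip)
  ultimately have "card ?centres \<le> card {v \<in> fst ?H. d \<le> degree ?H v}"
    by (intro card_le_card_high_degree[OF wf_copies[OF wf_complete_bip]]) auto
  then show ?thesis
    by (simp add: card_image inj_on_def)
qed

section \<open>Graphs without the forbidden induced subgraphs\<close>

lemma exists_few_related:
  fixes t :: nat
  assumes "finite P" "finite C" "2 * t * t < card P" "\<forall>c\<in>C. card {w \<in> P. Q w c} \<le> t"
  obtains w where "w \<in> P" "2 * t * card {c \<in> C. Q w c} \<le> card C"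
proof (rule ccontr)
  assume "\<not> thesis"
  then have "\<forall>w\<in>P. card C < 2 * t * card {c \<in> C. Q w c}"
    using that by (meson not_le)
  then have "(\<Sum>w\<in>P. card C) < (\<Sum>w\<in>P. 2 * t * card {c \<in> C. Q w c})"
    using assms(1,3) by (intro sum_strict_mono) auto
  also have "\<dots> = 2 * t * (\<Sum>c\<in>C. card {w \<in> P. Q w c})"
    using sum.swap_restrict[OF assms(1,2), of "\<lambda>_ _. 1::nat"] by (simp flip: sum_distrib_left)
  also have "\<dots> \<le> 2 * t * (\<Sum>c\<in>C. t)"
    using assms(4) by (intro mult_left_mono sum_mono) auto
  finally have "card P * card C < (2 * t * t) * card C"
    by (simp add: algebra_simps)
  then show False
    using assms(3) by (simp add: mult_less_cancel2)
qed

text \<open>Sets of size \<^term>\<open>growth t m\<close> are large enough for \<open>exists_light_vertex\<close>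
  (which needs \<open>2t(t + 1)\<close>) and for one greedy step to leave \<open>m\<close> vertices (which needs
  \<open>2t(m + 1)\<close>).\<close>

definition growth :: "nat \<Rightarrow> nat \<Rightarrow> nat" where
  "growth t m = 2 * t * (m + t + 1) + 1"

locale forbidden_free_graph =
  fixes G :: graph and n t :: nat
  assumes wf: "wf_graph G"
    and t_pos: "1 \<le> t"
    and ramsey: "\<forall>X\<subseteq>fst G. t \<le> card X \<longrightarrow>
                   (\<exists>Y\<subseteq>X. card Y = n \<and> clique Y (snd G) \<or> card Y = n \<and> indep Y (snd G))"
    and free: "H_free {complete n, complete_bip n n, copies n (complete_bip 1 n)} G"
begin

lemma finite_vertex_subset: "X \<subseteq> fst G \<Longrightarrow> finite X"
  using wf_graph_finite[OF wf] finite_subset by blast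

lemma large_set_contains_indep:
  assumes "X \<subseteq> fst G" "t \<le> card X"
  obtains Y where "Y \<subseteq> X" "card Y = n" "indep Y (snd G)"
proof -
  obtain Y where Y: "Y \<subseteq> X" "card Y = n" "clique Y (snd G) \<or> indep Y (snd G)"
    using ramsey assms by blast
  have "\<not> clique Y (snd G)"
    using clique_induced_sub[OF wf, of Y n] Y(1,2) assms(1) free by (auto simp: H_free_def)
  then show ?thesis
    using Y that by blast
qed

lemma no_large_biclique:
  assumes "T \<subseteq> fst G" "U \<subseteq> fst G" "t \<le> card T" "t \<le> card U" "\<forall>w\<in>T. \<forall>u\<in>U. {w, u} \<in> snd G"
  shows False
proof -
  obtain A where A: "A \<subseteq> T" "card A = n" "indep A (snd G)"
    using large_set_contains_indep assms(1,3) .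
  obtain B where B: "B \<subseteq> U" "card B = n" "indep B (snd G)"
    using large_set_contains_indep assms(2,4) .
  have "\<forall>a\<in>A. \<forall>b\<in>B. {a, b} \<in> snd G"
    using A(1) B(1) assms(5) by blast
  then have "induced_sub (complete_bip n n) G"
    using A B assms(1,2) by (intro biclique_induced_sub[OF wf, of A B n]) auto
  then show False
    using free by (simp add: H_free_def)
qed

definition heavy :: "nat \<Rightarrow> nat set \<Rightarrow> bool" where
  "heavy w S \<longleftrightarrow> t * (card (S - neighbours G w) + 1) \<le> card S"

lemma card_common_neighbours_ge:
  assumes "S \<subseteq> fst G" "T \<subseteq> {w \<in> fst G. heavy w S}" "card T = t"
  shows "t \<le> card {u \<in> S. \<forall>w\<in>T. {w, u} \<in> snd G}" (is "t \<le> card ?U")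
proof -
  have "T \<subseteq> fst G"
    using assms(2) by blast
  then have fin: "finite S" "finite T"
    using assms(1) by (simp_all add: finite_vertex_subset)
  have "S - ?U \<subseteq> (\<Union>w\<in>T. S - neighbours G w)"
    using assms(1) by (auto simp: neighbours_def)
  then have "card (S - ?U) \<le> card (\<Union>w\<in>T. S - neighbours G w)"
    using fin by (intro card_mono) auto
  also have "\<dots> \<le> (\<Sum>w\<in>T. card (S - neighbours G w))"
    by (rule card_UN_le[OF fin(2)])
  finally have missing: "card (S - ?U) \<le> (\<Sum>w\<in>T. card (S - neighbours G w))" .
  have "(\<Sum>w\<in>T. t * (card (S - neighbours G w) + 1)) \<le> (\<Sum>w\<in>T. card S)"
    using assms(2) by (intro sum_mono) (auto simp: heavy_def)
  then have "t * ((\<Sum>w\<in>T. card (S - neighbours G w)) + t) \<le> t * card S"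
    using assms(3) by (simp add: sum_distrib_left[symmetric] sum.distrib distrib_left)
  then have "(\<Sum>w\<in>T. card (S - neighbours G w)) + t \<le> card S"
    using t_pos by simp
  moreover have "card (S - ?U) = card S - card ?U" "card ?U \<le> card S"
    using fin(1) by (auto simp: card_Diff_subset intro: card_mono)
  ultimately show ?thesis
    using missing by linarith
qed

lemma card_heavy_less:
  assumes "S \<subseteq> fst G"
  shows "card {w \<in> fst G. heavy w S} < t"
proof (rule ccontr)
  assume "\<not> ?thesis"
  then obtain T where T: "T \<subseteq> {w \<in> fst G. heavy w S}" "card T = t"
    by (meson not_less obtain_subset_with_card_n)
  show False
  proof (rule no_large_biclique[of T "{u \<in> S. \<forall>w\<in>T. {w, u} \<in> snd G}"])
    show "t \<le> card {u \<in> S. \<forall>w\<in>T. {w, u} \<in> snd G}"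
      using assms T by (rule card_common_neighbours_ge)
  qed (use assms T in auto)
qed

lemma exists_light_vertex:
  assumes "P \<subseteq> fst G" "C \<subseteq> fst G" "\<forall>c\<in>C. L c \<subseteq> fst G" "2 * t * (t + 1) \<le> card P"
  obtains w where "w \<in> P" "\<not> heavy w P" "\<not> heavy w C"
    and "2 * t * card {c \<in> C. heavy w (L c)} \<le> card C"
proof -
  define HP where "HP = {w \<in> fst G. heavy w P}"
  define HC where "HC = {w \<in> fst G. heavy w C}"
  define P' where "P' = P - HP - HC"
  have fin: "finite P'" "finite C"
    using assms(1,2) finite_vertex_subset by (auto simp: P'_def)
  have "card P \<le> card (P' \<union> HP \<union> HC)"
    using assms(1) fin finite_vertex_subset by (intro card_mono) (auto simp: P'_def HP_def HC_def)
  also have "\<dots> \<le> card (P' \<union> HP) + card HC"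
    by (rule card_Un_le)
  also have "\<dots> \<le> card P' + card HP + card HC"
    using card_Un_le[of P' HP] by simp
  finally have "card P \<le> card P' + card HP + card HC" .
  then have "2 * t * t < card P'"
    using card_heavy_less[OF assms(1)] card_heavy_less[OF assms(2)] assms(4)
    unfolding HP_def HC_def by (simp add: algebra_simps)
  moreover have "\<forall>c\<in>C. card {w \<in> P'. heavy w (L c)} \<le> t"
  proof
    fix c assume "c \<in> C"
    have "card {w \<in> P'. heavy w (L c)} \<le> card {w \<in> fst G. heavy w (L c)}"
      using assms(1) by (intro card_mono finite_vertex_subset) (auto simp: P'_def)
    also have "\<dots> < t"
      using assms(3) \<open>c \<in> C\<close> by (intro card_heavy_less) auto
    finally show "card {w \<in> P'. heavy w (L c)} \<le> t"
      by simp
  qed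
  ultimately obtain w where "w \<in> P'" "2 * t * card {c \<in> C. heavy w (L c)} \<le> card C"
    by (rule exists_few_related[OF fin])
  then show ?thesis
    using that assms(1) by (auto simp: P'_def HP_def HC_def)
qed

lemma card_outside_closed_neighbours:
  assumes "\<not> heavy w S" "finite S" "t * (m + 1) \<le> card S"
  shows "m \<le> card (S - closed_neighbours G w)"
proof -
  have "t * (m + 1) < t * (card (S - neighbours G w) + 1)"
    using assms(1,3) unfolding heavy_def by linarith
  then have "m < card (S - neighbours G w)"
    by (simp only: mult_less_cancel1) simp
  moreover have "S - closed_neighbours G w = (S - neighbours G w) - {w}"
    by (auto simp: closed_neighbours_def)
  ultimately show ?thesis
    by (cases "w \<in> S - neighbours G w") (simp_all add: card_Diff_singleton)
qed

lemma light_vertex_step: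
  assumes "P \<subseteq> fst G" "C \<subseteq> fst G" "\<forall>c\<in>C. L c \<subseteq> fst G"
    and "growth t m \<le> card P" "growth t m \<le> card C" "\<forall>c\<in>C. growth t m \<le> card (L c)"
  obtains w where "w \<in> P" "m \<le> card (P - closed_neighbours G w)"
    and "m \<le> card {c \<in> C - closed_neighbours G w. \<not> heavy w (L c)}"
    and "\<forall>c\<in>C. \<not> heavy w (L c) \<longrightarrow> m \<le> card (L c - closed_neighbours G w)"
proof -
  have "2 * t * (t + 1) \<le> card P"
    using assms(4) by (simp add: growth_def algebra_simps)
  then obtain w where w: "w \<in> P" "\<not> heavy w P" "\<not> heavy w C"
    and few_heavy: "2 * t * card {c \<in> C. heavy w (L c)} \<le> card C"
    by (rule exists_light_vertex[OF assms(1-3)])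
  let ?H = "{c \<in> C. heavy w (L c)}"
  let ?C' = "{c \<in> C - closed_neighbours G w. \<not> heavy w (L c)}"
  have fin: "finite P" "finite C"
    using assms(1,2) by (simp_all add: finite_vertex_subset)
  have "t * (m + 1) \<le> card P"
    using assms(4) by (simp add: growth_def algebra_simps)
  then have P': "m \<le> card (P - closed_neighbours G w)"
    by (rule card_outside_closed_neighbours[OF w(2) fin(1)])
  have "t * (m + card ?H + 1) \<le> card C"
    using assms(5) few_heavy by (simp add: growth_def algebra_simps)
  then have "m + card ?H \<le> card (C - closed_neighbours G w)"
    by (rule card_outside_closed_neighbours[OF w(3) fin(2)])
  also have "\<dots> \<le> card (?C' \<union> ?H)"
    using fin(2) by (intro card_mono) auto
  also have "\<dots> \<le> card ?C' + card ?H"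
    by (rule card_Un_le)
  finally have C': "m \<le> card ?C'"
    by simp
  have "\<forall>c\<in>C. \<not> heavy w (L c) \<longrightarrow> m \<le> card (L c - closed_neighbours G w)"
  proof (intro ballI impI)
    fix c assume "c \<in> C" "\<not> heavy w (L c)"
    moreover have "t * (m + 1) \<le> card (L c)"
      using assms(6) \<open>c \<in> C\<close> by (fastforce simp: growth_def algebra_simps)
    ultimately show "m \<le> card (L c - closed_neighbours G w)"
      using assms(3) finite_vertex_subset by (blast intro: card_outside_closed_neighbours)
  qed
  then show ?thesis
    using that w(1) P' C' by blast
qed

lemma independent_leaves:
  assumes "R \<subseteq> fst G" "C \<subseteq> fst G" "\<forall>c\<in>C. L c \<subseteq> fst G"
    and "(growth t ^^ j) m \<le> card R" "(growth t ^^ j) m \<le> card C"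
    and "\<forall>c\<in>C. (growth t ^^ j) m \<le> card (L c)"
  shows "\<exists>\<Lambda> C' L'. \<Lambda> \<subseteq> R \<and> card \<Lambda> = j \<and> indep \<Lambda> (snd G) \<and> C' \<subseteq> C \<and> m \<le> card C' \<and>
           (\<forall>c\<in>C'. L' c \<subseteq> L c \<and> m \<le> card (L' c)) \<and> separated G \<Lambda> (C' \<union> (\<Union>c\<in>C'. L' c))"
  using assms
proof (induction j arbitrary: R C L)
  case 0
  then show ?case
    by (intro exI[of _ "{}"] exI[of _ C] exI[of _ L]) (simp add: separated_def)
next
  case (Suc j)
  let ?m = "(growth t ^^ j) m"
  obtain w where w: "w \<in> R" and R': "?m \<le> card (R - closed_neighbours G w)"
    and C': "?m \<le> card {c \<in> C - closed_neighbours G w. \<not> heavy w (L c)}"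
    and L': "\<forall>c\<in>C. \<not> heavy w (L c) \<longrightarrow> ?m \<le> card (L c - closed_neighbours G w)"
    by (rule light_vertex_step[OF Suc.prems(1-3)]) (use Suc.prems(4-6) in auto)
  define C1 where "C1 = {c \<in> C - closed_neighbours G w. \<not> heavy w (L c)}"
  define L1 where "L1 c = L c - closed_neighbours G w" for c
  have "\<exists>\<Lambda> C' L'. \<Lambda> \<subseteq> R - closed_neighbours G w \<and> card \<Lambda> = j \<and> indep \<Lambda> (snd G) \<and>
          C' \<subseteq> C1 \<and> m \<le> card C' \<and> (\<forall>c\<in>C'. L' c \<subseteq> L1 c \<and> m \<le> card (L' c)) \<and>
          separated G \<Lambda> (C' \<union> (\<Union>c\<in>C'. L' c))"
    using Suc.prems(1-3) R' C' L' by (intro Suc.IH) (auto simp: C1_def L1_def)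
  then obtain \<Lambda> C2 L2 where \<Lambda>: "\<Lambda> \<subseteq> R - closed_neighbours G w" "card \<Lambda> = j" "indep \<Lambda> (snd G)"
    and C2: "C2 \<subseteq> C1" "m \<le> card C2" and L2: "\<forall>c\<in>C2. L2 c \<subseteq> L1 c \<and> m \<le> card (L2 c)"
    and sep: "separated G \<Lambda> (C2 \<union> (\<Union>c\<in>C2. L2 c))"
    by blast
  have far: "C2 \<union> (\<Union>c\<in>C2. L2 c) \<subseteq> fst G - closed_neighbours G w"
    using C2(1) L2 Suc.prems(2,3) unfolding C1_def L1_def by blast
  have w_\<Lambda>: "separated G {w} \<Lambda>"
    using \<Lambda>(1) Suc.prems(1) by (intro separated_outside_closed_neighbours) auto
  have "w \<notin> \<Lambda>"
    using \<Lambda>(1) by (auto simp: closed_neighbours_def)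
  have "finite \<Lambda>"
    by (rule finite_vertex_subset) (use \<Lambda>(1) Suc.prems(1) in blast)
  show ?case
  proof (intro exI conjI)
    show "insert w \<Lambda> \<subseteq> R"
      using w \<Lambda>(1) by auto
    show "card (insert w \<Lambda>) = Suc j"
      using \<Lambda>(2) \<open>w \<notin> \<Lambda>\<close> \<open>finite \<Lambda>\<close> by simp
    show "indep (insert w \<Lambda>) (snd G)"
      using \<Lambda>(3) w_\<Lambda> by (rule indep_insert_separated)
    show "C2 \<subseteq> C" "m \<le> card C2"
      using C2 by (auto simp: C1_def)
    show "\<forall>c\<in>C2. L2 c \<subseteq> L c \<and> m \<le> card (L2 c)"
      using L2 by (auto simp: L1_def)
    show "separated G (insert w \<Lambda>) (C2 \<union> (\<Union>c\<in>C2. L2 c))"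
      using separated_outside_closed_neighbours[OF far] sep by (rule separated_insertI)
  qed
qed

lemma le_growth: "m \<le> growth t m"
proof -
  obtain s where "t = Suc s"
    using t_pos by (cases t) auto
  then show ?thesis
    by (simp add: growth_def)
qed

lemma separated_star:
  assumes "C \<subseteq> fst G" "\<forall>c\<in>C. L c \<subseteq> neighbours G c"
    and "growth t ((growth t ^^ n) m) \<le> card C" "\<forall>c\<in>C. growth t ((growth t ^^ n) m) \<le> card (L c)"
  obtains w \<Lambda> C' L' where "w \<in> C" "\<Lambda> \<subseteq> L w" "card \<Lambda> = n" "indep \<Lambda> (snd G)"
    and "C' \<subseteq> C" "m \<le> card C'" "\<forall>c\<in>C'. L' c \<subseteq> L c \<and> m \<le> card (L' c)"
    and "separated G (insert w \<Lambda>) (C' \<union> (\<Union>c\<in>C'. L' c))"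
proof -
  let ?y = "(growth t ^^ n) m"
  have L_vertices: "\<forall>c\<in>C. L c \<subseteq> fst G"
    using assms(2) by (auto simp: neighbours_def)
  obtain w where w: "w \<in> C"
    and C1: "?y \<le> card {c \<in> C - closed_neighbours G w. \<not> heavy w (L c)}"
    and L1: "\<forall>c\<in>C. \<not> heavy w (L c) \<longrightarrow> ?y \<le> card (L c - closed_neighbours G w)"
    by (rule light_vertex_step[OF assms(1) assms(1) L_vertices]) (use assms(3,4) in auto)
  define C1 where "C1 = {c \<in> C - closed_neighbours G w. \<not> heavy w (L c)}"
  define L1 where "L1 c = L c - closed_neighbours G w" for c
  have "?y \<le> card (L w)"
    using assms(4) w le_growth[of ?y] by auto
  then have "\<exists>\<Lambda> C' L'. \<Lambda> \<subseteq> L w \<and> card \<Lambda> = n \<and> indep \<Lambda> (snd G) \<and> C' \<subseteq> C1 \<and> m \<le> card C' \<and>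
           (\<forall>c\<in>C'. L' c \<subseteq> L1 c \<and> m \<le> card (L' c)) \<and> separated G \<Lambda> (C' \<union> (\<Union>c\<in>C'. L' c))"
    using w assms(1) L_vertices C1 L1
    by (intro independent_leaves) (auto simp: C1_def L1_def)
  then obtain \<Lambda> C' L' where \<Lambda>: "\<Lambda> \<subseteq> L w" "card \<Lambda> = n" "indep \<Lambda> (snd G)"
    and C': "C' \<subseteq> C1" "m \<le> card C'" and L': "\<forall>c\<in>C'. L' c \<subseteq> L1 c \<and> m \<le> card (L' c)"
    and sep: "separated G \<Lambda> (C' \<union> (\<Union>c\<in>C'. L' c))"
    by blast
  have "C' \<union> (\<Union>c\<in>C'. L' c) \<subseteq> fst G - closed_neighbours G w"
    using C'(1) L' assms(1) L_vertices unfolding C1_def L1_def by blast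
  then have "separated G (insert w \<Lambda>) (C' \<union> (\<Union>c\<in>C'. L' c))"
    by (rule separated_insertI[OF separated_outside_closed_neighbours sep])
  moreover have "C' \<subseteq> C" "\<forall>c\<in>C'. L' c \<subseteq> L c \<and> m \<le> card (L' c)"
    using C'(1) L' by (auto simp: C1_def L1_def)
  ultimately show ?thesis
    using that w \<Lambda> C'(2) by blast
qed

lemma induced_star_forest:
  assumes "C \<subseteq> fst G" "\<forall>c\<in>C. L c \<subseteq> neighbours G c"
    and "(growth t ^^ (k * Suc n)) 0 \<le> card C" "\<forall>c\<in>C. (growth t ^^ (k * Suc n)) 0 \<le> card (L c)"
  shows "\<exists>\<phi>. induced_embedding star_forest_adj ({0..<k} \<times> {0..<Suc n}) G \<phi> \<and>
             \<phi> ` ({0..<k} \<times> {0..<Suc n}) \<subseteq> C \<union> (\<Union>c\<in>C. L c)"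
  using assms
proof (induction k arbitrary: C L)
  case 0
  then show ?case
    by (intro exI[of _ "\<lambda>_. 0"]) (simp add: induced_embedding_def)
next
  case (Suc k)
  let ?D = "{0..<k} \<times> {0..<Suc n}"
  let ?x = "(growth t ^^ (k * Suc n)) 0"
  have "Suc k * Suc n = Suc n + k * Suc n"
    by simp
  then have "(growth t ^^ (Suc k * Suc n)) 0 = growth t ((growth t ^^ n) ?x)"
    by (simp only: funpow_add funpow.simps(2) o_apply)
  then obtain w \<Lambda> C' L' where w: "w \<in> C" and \<Lambda>: "\<Lambda> \<subseteq> L w" "card \<Lambda> = n" "indep \<Lambda> (snd G)"
    and C': "C' \<subseteq> C" "?x \<le> card C'" and L': "\<forall>c\<in>C'. L' c \<subseteq> L c \<and> ?x \<le> card (L' c)"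
    and sep: "separated G (insert w \<Lambda>) (C' \<union> (\<Union>c\<in>C'. L' c))"
    using Suc.prems by (elim separated_star) auto
  have "\<exists>\<phi>. induced_embedding star_forest_adj ?D G \<phi> \<and> \<phi> ` ?D \<subseteq> C' \<union> (\<Union>c\<in>C'. L' c)"
    using C' L' Suc.prems(1,2) by (intro Suc.IH) blast+
  then obtain \<phi> where \<phi>: "induced_embedding star_forest_adj ?D G \<phi>"
    and \<phi>_img: "\<phi> ` ?D \<subseteq> C' \<union> (\<Union>c\<in>C'. L' c)"
    by blast
  have "separated G (\<phi> ` ?D) (insert w \<Lambda>)"
    using separated_mono[OF sep order_refl \<phi>_img] by (simp add: separated_sym)
  moreover have "w \<in> fst G" "\<Lambda> \<subseteq> neighbours G w"
    using w \<Lambda>(1) Suc.prems(1,2) by auto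
  ultimately obtain \<psi> where \<psi>: "induced_embedding star_forest_adj ({0..<Suc k} \<times> {0..<Suc n}) G \<psi>"
    and \<psi>_img: "\<psi> ` ({0..<Suc k} \<times> {0..<Suc n}) \<subseteq> \<phi> ` ?D \<union> insert w \<Lambda>"
    using star_forest_extend[OF wf \<phi> _ _ \<Lambda>(2,3)] by blast
  have "\<phi> ` ?D \<subseteq> C \<union> (\<Union>c\<in>C. L c)"
    using \<phi>_img C'(1) L' by blast
  moreover have "insert w \<Lambda> \<subseteq> C \<union> (\<Union>c\<in>C. L c)"
    using w \<Lambda>(1) by blast
  ultimately have "\<phi> ` ?D \<union> insert w \<Lambda> \<subseteq> C \<union> (\<Union>c\<in>C. L c)"
    by (rule Un_least)
  with \<psi>_img have "\<psi> ` ({0..<Suc k} \<times> {0..<Suc n}) \<subseteq> C \<union> (\<Union>c\<in>C. L c)"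
    by (rule order_trans)
  then show ?case
    using \<psi> by blast
qed

theorem card_high_degree_less:
  "card {v \<in> fst G. (growth t ^^ (n * Suc n)) 0 \<le> degree G v} < (growth t ^^ (n * Suc n)) 0"
proof (rule ccontr)
  let ?C = "{v \<in> fst G. (growth t ^^ (n * Suc n)) 0 \<le> degree G v}"
  assume "\<not> card ?C < (growth t ^^ (n * Suc n)) 0"
  then obtain \<phi> where "induced_embedding star_forest_adj ({0..<n} \<times> {0..<Suc n}) G \<phi>"
    using induced_star_forest[of ?C "neighbours G" n] by (auto simp: degree_eq_card_neighbours)
  then have "induced_sub (copies n (complete_bip 1 n)) G"
    by (rule star_forest_induced_sub)
  then show False
    using free by (simp add: H_free_def)
qed

end

lemma few_high_degree_vertices:
  "\<exists>c. \<forall>G. wf_graph G \<and> H_free {complete n, complete_bip n n, copies n (complete_bip 1 n)} G \<longrightarrow>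
         card {v \<in> fst G. c \<le> degree G v} < c"
proof -
  obtain r where r: "r \<ge> 1" "\<forall>(V :: nat set) E. finite V \<and> r \<le> card V \<longrightarrow>
      (\<exists>R\<subseteq>V. card R = n \<and> clique R E \<or> card R = n \<and> indep R E)"
    using ramsey2[of n n] by blast
  have "card {v \<in> fst G. (growth r ^^ (n * Suc n)) 0 \<le> degree G v} < (growth r ^^ (n * Suc n)) 0"
    if "wf_graph G" "H_free {complete n, complete_bip n n, copies n (complete_bip 1 n)} G" for G
  proof -
    interpret forbidden_free_graph G n r
      using that r wf_graph_finite[OF that(1)] by unfold_locales (auto intro: finite_subset)
    show ?thesis
      by (rule card_high_degree_less)
  qed
  then show ?thesis
    by blast
qed

lemma fam_le_forbidden_if_few_high_degree:
  assumes "\<forall>G. wf_graph G \<and> H_free \<H> G \<longrightarrow> card {v \<in> fst G. c1 \<le> degree G v} < c2"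
    and "c1 < N" "c2 \<le> N"
  shows "fam_le \<H> {complete N, complete_bip N N, copies N (complete_bip 1 N)}"
  unfolding fam_le_iff_not_H_free
proof
  fix H assume H: "H \<in> {complete N, complete_bip N N, copies N (complete_bip 1 N)}"
  then have "wf_graph H" and "N \<le> card {v \<in> fst H. c1 \<le> degree H v}"
    using assms(2) wf_complete wf_complete_bip wf_copies[OF wf_complete_bip]
      card_high_degree_complete card_high_degree_complete_bip card_high_degree_copies
    by auto
  show "\<not> H_free \<H> H"
  proof
    assume "H_free \<H> H"
    then have "card {v \<in> fst H. c1 \<le> degree H v} < c2"
      using assms(1) \<open>wf_graph H\<close> by blast
    then show False
      using \<open>N \<le> card {v \<in> fst H. c1 \<le> degree H v}\<close> assms(3) by linarith
  qed
qed

theorem theorem1p12: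
  fixes \<H> :: "graph set"
  assumes "\<forall>H\<in>\<H>. wf_graph H"
  shows "(\<exists>c1 c2 :: nat. \<forall>G. wf_graph G \<and> H_free \<H> G \<longrightarrow>
            card {v \<in> fst G. degree G v \<ge> c1} < c2)
     \<longleftrightarrow> (\<exists>n::nat. n > 0 \<and>
            fam_le \<H> {complete n, complete_bip n n, copies n (complete_bip 1 n)})"
proof
  assume "\<exists>c1 c2 :: nat. \<forall>G. wf_graph G \<and> H_free \<H> G \<longrightarrow> card {v \<in> fst G. degree G v \<ge> c1} < c2"
  then obtain c1 c2 :: nat
    where bounded: "\<forall>G. wf_graph G \<and> H_free \<H> G \<longrightarrow> card {v \<in> fst G. c1 \<le> degree G v} < c2"
    by blast
  let ?N = "c1 + c2 + 1"
  have "fam_le \<H> {complete ?N, complete_bip ?N ?N, copies ?N (complete_bip 1 ?N)}"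
    using bounded by (rule fam_le_forbidden_if_few_high_degree) simp_all
  then show "\<exists>n. n > 0 \<and> fam_le \<H> {complete n, complete_bip n n, copies n (complete_bip 1 n)}"
    by (intro exI[of _ ?N]) simp
next
  assume "\<exists>n. n > 0 \<and> fam_le \<H> {complete n, complete_bip n n, copies n (complete_bip 1 n)}"
  then obtain n where "fam_le \<H> {complete n, complete_bip n n, copies n (complete_bip 1 n)}"
    by blast
  then have "H_free {complete n, complete_bip n n, copies n (complete_bip 1 n)} G" if "H_free \<H> G" for G
    using that by (rule H_free_mono)
  with few_high_degree_vertices[of n] show "\<exists>c1 c2. \<forall>G. wf_graph G \<and> H_free \<H> G \<longrightarrow>
      card {v \<in> fst G. degree G v \<ge> c1} < c2"
    by blast
qed

end
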